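(* For $u_0\ll -1$ (i.e. $|u_0|$ large enough) there exist constants $0<c\leq C$, independent of $s\in(0,1]$ and of the smooth function $\phi$ on $\Omega_{u_0}$, such that $$c\,I_s(\phi)\leq \mathcal E_{\mathcal H_s}(\phi)\leq C\, I_s(\phi),\qquad I_s(\phi):=\int_{\mathcal H_s}\Big[u^2|\partial_u\phi|^2+\frac{R}{|u|}|\partial_R\phi|^2+|\nabla_{S^2}\phi|^2\Big]\,\mathrm{d}u\,\mathrm{d}\omega ,$$ where $\mathcal H_s$ is parametrised by $(u,\omega)$.
   Context: Vaidya spacetime: in coordinates $(u,r,\theta,\phi)$, $g=F\,\mathrm{d}u^2+2\,\mathrm{d}u\,\mathrm{d}r-r^2\mathrm{d}\omega^2$, $F=1-2m(u)/r$, with $m$ smooth, non-increasing, positive and bounded. Let $R=1/r$, so that $F=1-2m(u)R$; the rescaled metric is $\hat g=R^2g=R^2F\,\mathrm{d}u^2-2\,\mathrm{d}u\,\mathrm{d}R-\mathrm{d}\omega^2$. The function $\psi>0$ solves $\partial_u\psi-\frac F2\partial_r\psi+\frac{2m'(u)}{Fr}\psi=0$ with $\psi=1$ on past null infinity $\mathscr I^-$ (integrating along integral curves of $\partial_u-\frac F2\partial_r$); $v$ is a fixed function with $\mathrm{d}v=\psi\,\mathrm{d}u+2\psi F^{-1}\mathrm{d}r$; $\tilde r=(v-u)/2$, $t=(u+v)/2$. For $u_0<0$: $\Omega_{u_0}=\{t\ge0\}\cap\{u<u_0\}$ and, for $0<s\le1$, $\mathcal H_s=\{u=-s\tilde r\}\cap\{u<u_0\}$.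 Writing $\phi_u=\partial_u\phi,\ \phi_R=\partial_R\phi$ (in coordinates $(u,R,\omega)$) and $\nabla_{S^2}$ the gradient on the unit sphere, the energy is $$\mathcal E_{\mathcal H_s}(\phi)=\int_{\mathcal H_s}\Big\{u^2\phi_u^2+u^2R^2F\phi_u\phi_R+|\nabla_{S^2}\phi|^2\Big[u^2\frac{FR^2}{4s\psi}(2+s(\psi-1))+(1+uR)\Big]+R^2F\Big[\frac{2+s(\psi-1)}{4s\psi}\big((2+uR)^2-2m(u)u^2R^3\big)-(1+uR)\Big]\phi_R^2\Big\}\,\mathrm{d}u\,\mathrm{d}\omega .$$ (This is the flux through $\mathcal H_s$ of the current built from the Morawetz field $T=u^2\partial_u-2(1+uR)\partial_R$ and $T_{ab}=\nabla_a\phi\nabla_b\phi-\frac12\hat g_{ab}\nabla_c\phi\nabla^c\phi$.) *)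

theory Defs
  imports "HOL-Analysis.Analysis"
begin

fun Ck_on :: "nat \<Rightarrow> 'a::euclidean_space set \<Rightarrow> ('a \<Rightarrow> real) \<Rightarrow> bool" where
  "Ck_on 0 S f = continuous_on S f"
| "Ck_on (Suc k) S f = ((\<forall>x\<in>S. f differentiable (at x)) \<and>
      (\<forall>i\<in>Basis. Ck_on k S (\<lambda>x. frechet_derivative f (at x) i)))"

definition smooth_on :: "'a::euclidean_space set \<Rightarrow> ('a \<Rightarrow> real) \<Rightarrow> bool" where
  "smooth_on S f \<longleftrightarrow> open S \<and> (\<forall>k. Ck_on k S f)"

definition Fr :: "(real \<Rightarrow> real) \<Rightarrow> real \<Rightarrow> real \<Rightarrow> real" where
  "Fr m u r = 1 - 2 * m u / r"

definition exterior :: "(real \<Rightarrow> real) \<Rightarrow> (real \<times> real) set" where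
  "exterior m = {(u, r). r > 2 * m u}"

text \<open>Omega_{u0} = {t >= 0} inter {u < u0}, in coordinates (u,R), R = 1/r, t = (u+v)/2.\<close>
definition Omega :: "(real \<Rightarrow> real) \<Rightarrow> (real \<Rightarrow> real \<Rightarrow> real) \<Rightarrow> real \<Rightarrow> (real \<times> real) set" where
  "Omega m v u0 = {(u, R). R > 0 \<and> 1 / R > 2 * m u \<and> u < u0 \<and> (u + v u (1 / R)) / 2 \<ge> 0}"

text \<open>H_s = {u = - s * rtilde} inter {u < u0}, rtilde = (v - u)/2, in coordinates (u,R).\<close>
definition Hs :: "(real \<Rightarrow> real) \<Rightarrow> (real \<Rightarrow> real \<Rightarrow> real) \<Rightarrow> real \<Rightarrow> real \<Rightarrow> (real \<times> real) set" where
  "Hs m v u0 s = {(u, R). R > 0 \<and> 1 / R > 2 * m u \<and> u < u0 \<and> u = - s * ((v u (1 / R) - u) / 2)}"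

definition Hs_R :: "(real \<Rightarrow> real) \<Rightarrow> (real \<Rightarrow> real \<Rightarrow> real) \<Rightarrow> real \<Rightarrow> real \<Rightarrow> real \<Rightarrow> real" where
  "Hs_R m v u0 s u = (THE R. (u, R) \<in> Hs m v u0 s)"

definition sph :: "real \<Rightarrow> real \<Rightarrow> real^3" where
  "sph th vp = vector [sin th * cos vp, sin th * sin vp, cos th]"

text \<open>Parameter domain of H_s: (u, theta, varphi); the measure du d omega becomes
  sin theta du dtheta dvarphi (Lebesgue measure on R^3 times the density sin theta).\<close>
definition Hs_param :: "(real \<Rightarrow> real) \<Rightarrow> (real \<Rightarrow> real \<Rightarrow> real) \<Rightarrow> real \<Rightarrow> real \<Rightarrow> (real \<times> real \<times> real) set" where
  "Hs_param m v u0 s = {(u, th, vp). (\<exists>R. (u, R) \<in> Hs m v u0 s) \<and> 0 < th \<and> th < pi \<and> 0 < vp \<and> vp < 2 * pi}"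

definition phi_u :: "(real \<times> real \<times> (real^3) \<Rightarrow> real) \<Rightarrow> real \<Rightarrow> real \<Rightarrow> (real^3) \<Rightarrow> real" where
  "phi_u \<phi> u R x = frechet_derivative \<phi> (at (u, R, x)) (1, 0, 0)"

definition phi_R :: "(real \<times> real \<times> (real^3) \<Rightarrow> real) \<Rightarrow> real \<Rightarrow> real \<Rightarrow> (real^3) \<Rightarrow> real" where
  "phi_R \<phi> u R x = frechet_derivative \<phi> (at (u, R, x)) (0, 1, 0)"

definition grad_x :: "(real \<times> real \<times> (real^3) \<Rightarrow> real) \<Rightarrow> real \<Rightarrow> real \<Rightarrow> (real^3) \<Rightarrow> real^3" where
  "grad_x \<phi> u R x = (\<chi> i. frechet_derivative \<phi> (at (u, R, x)) (0, 0, axis i 1))"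

text \<open>|nabla_{S^2} phi|^2 at a point x of the unit sphere: squared norm of the tangential
  projection of the gradient.\<close>
definition sph_grad_sq :: "(real \<times> real \<times> (real^3) \<Rightarrow> real) \<Rightarrow> real \<Rightarrow> real \<Rightarrow> (real^3) \<Rightarrow> real" where
  "sph_grad_sq \<phi> u R x =
     (let g = grad_x \<phi> u R x in (norm (g - (g \<bullet> x) *\<^sub>R x))\<^sup>2)"

definition energy_density ::
  "(real \<Rightarrow> real) \<Rightarrow> (real \<Rightarrow> real \<Rightarrow> real) \<Rightarrow> real \<Rightarrow> (real \<times> real \<times> (real^3) \<Rightarrow> real)
   \<Rightarrow> real \<Rightarrow> real \<Rightarrow> (real^3) \<Rightarrow> real" where
  "energy_density m \<psi> s \<phi> u R x =
     (let F = 1 - 2 * m u * R; p = \<psi> u (1 / R);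
          pu = phi_u \<phi> u R x; pR = phi_R \<phi> u R x; G = sph_grad_sq \<phi> u R x
      in u\<^sup>2 * pu\<^sup>2 + u\<^sup>2 * R\<^sup>2 * F * pu * pR
         + G * (u\<^sup>2 * F * R\<^sup>2 / (4 * s * p) * (2 + s * (p - 1)) + (1 + u * R))
         + R\<^sup>2 * F * ((2 + s * (p - 1)) / (4 * s * p) * ((2 + u * R)\<^sup>2 - 2 * m u * u\<^sup>2 * R ^ 3)
                       - (1 + u * R)) * pR\<^sup>2)"

definition I_density ::
  "(real \<times> real \<times> (real^3) \<Rightarrow> real) \<Rightarrow> real \<Rightarrow> real \<Rightarrow> (real^3) \<Rightarrow> real" where
  "I_density \<phi> u R x =
     u\<^sup>2 * (phi_u \<phi> u R x)\<^sup>2 + R / \<bar>u\<bar> * (phi_R \<phi> u R x)\<^sup>2 + sph_grad_sq \<phi> u R x"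

definition on_Hs ::
  "(real \<Rightarrow> real) \<Rightarrow> (real \<Rightarrow> real \<Rightarrow> real) \<Rightarrow> real \<Rightarrow> real \<Rightarrow> (real \<Rightarrow> real \<Rightarrow> (real^3) \<Rightarrow> real)
   \<Rightarrow> real \<times> real \<times> real \<Rightarrow> real" where
  "on_Hs m v u0 s f = (\<lambda>(u, th, vp). f u (Hs_R m v u0 s u) (sph th vp) * sin th)"

definition energy_Hs where
  "energy_Hs m \<psi> v u0 s \<phi> =
     (LINT q : Hs_param m v u0 s | lborel. on_Hs m v u0 s (energy_density m \<psi> s \<phi>) q)"

definition I_Hs where
  "I_Hs m v u0 s \<phi> = (LINT q : Hs_param m v u0 s | lborel. on_Hs m v u0 s (I_density \<phi>) q)"

end

theory Submission
  imports Defs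
begin

text \<open>On \<open>\<H>\<^sub>s\<close> the energy density is a quadratic form in \<open>(u \<phi>\<^sub>u, R \<phi>\<^sub>R, \<nabla>\<phi>)\<close> whose coefficients
  depend only on \<open>s\<close>, \<open>x = |u| R\<close>, \<open>F\<close> and \<open>\<psi>\<close>. For \<open>u\<^sub>0 \<ll> -1\<close> the hypersurface \<open>\<H>\<^sub>s\<close> lies where
  \<open>v \<approx> u + 2r\<close>, i.e. \<open>r \<approx> |u|/s\<close>; hence \<open>x \<approx> s\<close>, \<open>F \<approx> 1\<close>, and also \<open>\<psi> \<approx> 1\<close>: along the integral
  curves of \<open>\<partial>\<^sub>u - (F/2) \<partial>\<^sub>r\<close> one has \<open>(ln \<psi>)' = -2m'/(r - 2m) \<ge> 0\<close>, which integrates from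
  \<open>\<psi> = 1\<close> on \<open>\<I>\<^sup>-\<close> to \<open>0 \<le> ln \<psi> \<le> 4 sup m / r\<close>. With these approximations the quadratic form
  is pinched between \<open>1/100\<close> and \<open>5\<close> times the density of \<open>I\<^sub>s\<close>, uniformly in \<open>s \<in> (0,1]\<close>, and the
  pointwise bounds integrate over \<open>\<H>\<^sub>s\<close>.\<close>

lemma cross_term_bounds:
  fixes a b k :: real
  shows "k * (a * b) \<le> 3/4 * a\<^sup>2 + k\<^sup>2 * b\<^sup>2 / 3"
    and "- (k * (a * b)) \<le> 1/2 * a\<^sup>2 + k\<^sup>2 * b\<^sup>2 / 2"
proof -
  have "0 \<le> (3 * a - 2 * k * b)\<^sup>2" "0 \<le> (a + k * b)\<^sup>2" by simp_all
  then show "k * (a * b) \<le> 3/4 * a\<^sup>2 + k\<^sup>2 * b\<^sup>2 / 3" "- (k * (a * b)) \<le> 1/2 * a\<^sup>2 + k\<^sup>2 * b\<^sup>2 / 2"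
    by (simp_all add: power2_eq_square algebra_simps)
qed

lemma radial_coefficient_bounds:
  fixes x F X q :: real
  assumes x: "0 < x" "x \<le> 101/100" and X: "49/100 \<le> X" "X \<le> 51/100"
    and F: "9998/10000 \<le> F" "F \<le> 1" and q: "0 \<le> q" "q \<le> 2/10000"
  defines "K \<equiv> F * (X * ((2 - x)\<^sup>2 - q * x\<^sup>2) - x * (1 - x))"
  shows "1/100 \<le> K - x ^ 3 * F\<^sup>2 / 3" and "K + x ^ 3 * F\<^sup>2 / 2 \<le> 5"
proof -
  define B where "B = X * ((2 - x)\<^sup>2 - q * x\<^sup>2) - x * (1 - x)"
  have "x\<^sup>2 \<le> (101/100)\<^sup>2" using x by (intro power_mono) auto
  then have x2: "x\<^sup>2 \<le> 10201/10000" by (simp add: power2_eq_square)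
  have x3: "x ^ 3 \<le> 101/100 * x\<^sup>2"
    using x by (simp add: power2_eq_square power3_eq_cube mult_right_mono)
  have x3F: "x ^ 3 * F\<^sup>2 \<le> x ^ 3" using F x by (simp add: mult_left_le power_le_one)
  have B_eq: "B = X * (2 - x)\<^sup>2 - X * (q * x\<^sup>2) - x + x\<^sup>2"
    by (simp add: B_def algebra_simps power2_eq_square)
  have "X * (2 - x)\<^sup>2 \<ge> 49/100 * (2 - x)\<^sup>2" using X by (intro mult_right_mono) auto
  moreover have "X * (q * x\<^sup>2) \<le> 51/100 * (2/10000 * (10201/10000))"
    using X q x2 by (intro mult_mono) auto
  moreover have "(2 - x)\<^sup>2 = 4 - 4 * x + x\<^sup>2" by (simp add: algebra_simps power2_eq_square)
  ultimately have B_quadratic: "B \<ge> 149/100 * x\<^sup>2 - 296/100 * x + 196/100 - 2/10000"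
    unfolding B_eq by (simp add: power2_eq_square)
  have "0 \<le> x\<^sup>2 - 198/100 * x + 9801/10000"
    using zero_le_power2[of "x - 99/100"] by (simp add: algebra_simps power2_eq_square)
  then have B_pos: "B \<ge> 48/100" using B_quadratic x by linarith
  have "0 \<le> x\<^sup>2 - 256/100 * x + 16384/10000"
    using zero_le_power2[of "x - 128/100"] by (simp add: algebra_simps power2_eq_square)
  moreover have "F * B \<ge> 9998/10000 * B" using F B_pos by (simp add: mult_right_mono)
  ultimately show "1/100 \<le> K - x ^ 3 * F\<^sup>2 / 3"
    using B_quadratic x3 x3F x unfolding K_def B_def[symmetric] by linarith
  have "(2 - x)\<^sup>2 \<le> 2\<^sup>2" using x by (intro power_mono) auto
  then have "X * (2 - x)\<^sup>2 \<le> 51/100 * 2\<^sup>2" using X by (intro mult_mono) auto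
  moreover have "0 \<le> X * (q * x\<^sup>2)" using X q by simp
  ultimately have "B \<le> 51/100 * 4 + 10201/10000"
    unfolding B_eq using x2 x by simp
  moreover have "F * B \<le> B" using F B_pos by (simp add: mult_left_le_one_le)
  ultimately show "K + x ^ 3 * F\<^sup>2 / 2 \<le> 5"
    using x2 x3 x3F unfolding K_def B_def[symmetric] by linarith
qed

lemma angular_coefficient_bounds:
  fixes x F X :: real
  assumes x: "0 < x" "x \<le> 101/100" and X: "49/100 \<le> X" "X \<le> 51/100"
    and F: "9998/10000 \<le> F" "F \<le> 1"
  shows "1/100 \<le> x * F * X + 1 - x" and "x * F * X + 1 - x \<le> 5"
proof -
  have FX: "9998/10000 * (49/100) \<le> F * X" "F * X \<le> 1 * (51/100)"
    using F X by (intro mult_mono; simp)+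
  have "x * (9998/10000 * (49/100)) \<le> x * (F * X)"
    using FX x by (intro mult_left_mono) auto
  moreover have "x * (F * X) \<le> 101/100 * (51/100)"
    using FX x by (intro mult_mono) auto
  moreover have "x * F * X = x * (F * X)" by (simp add: mult.assoc)
  ultimately show "1/100 \<le> x * F * X + 1 - x" "x * F * X + 1 - x \<le> 5"
    using x by linarith+
qed

text \<open>With \<open>x = |u| R\<close>, \<open>a = u \<phi>\<^sub>u\<close>, \<open>b = R \<phi>\<^sub>R\<close> and \<open>\<beta> = b\<^sup>2/x = R \<phi>\<^sub>R\<^sup>2/|u|\<close>, the energy density
  is \<open>a\<^sup>2 - xF ab + K \<beta> + \<Gamma> |\<nabla>\<phi>|\<^sup>2\<close> while the density of \<open>I\<^sub>s\<close> is \<open>a\<^sup>2 + \<beta> + |\<nabla>\<phi>|\<^sup>2\<close>.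
  The hypotheses say \<open>x \<approx> s\<close>, \<open>F \<approx> 1\<close> and \<open>\<psi> \<approx> 1\<close>, whence \<open>X \<approx> 1/2\<close> uniformly in \<open>s\<close>; the cross
  term is absorbed by \<open>cross_term_bounds\<close>.\<close>

lemma energy_density_comparable:
  fixes s u R \<mu> p pu pR G :: real
  assumes s: "0 < s" "s \<le> 1" and u: "u < 0" and R: "R > 0" and \<mu>: "\<mu> > 0" and G: "G \<ge> 0"
    and y: "99/100 \<le> - u * R / s" "- u * R / s \<le> 101/100"
    and p: "1 \<le> p" "p \<le> 1001/1000"
    and q: "2 * \<mu> * R \<le> 2/10000"
  defines "E \<equiv> u\<^sup>2 * pu\<^sup>2 + u\<^sup>2 * R\<^sup>2 * (1 - 2 * \<mu> * R) * pu * pR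
         + G * (u\<^sup>2 * (1 - 2 * \<mu> * R) * R\<^sup>2 / (4 * s * p) * (2 + s * (p - 1)) + (1 + u * R))
         + R\<^sup>2 * (1 - 2 * \<mu> * R) * ((2 + s * (p - 1)) / (4 * s * p) * ((2 + u * R)\<^sup>2 - 2 * \<mu> * u\<^sup>2 * R ^ 3)
                       - (1 + u * R)) * pR\<^sup>2"
    and "I \<equiv> u\<^sup>2 * pu\<^sup>2 + R / \<bar>u\<bar> * pR\<^sup>2 + G"
  shows "1/100 * I \<le> E \<and> E \<le> 5 * I"
proof -
  define x F X where "x = - u * R" and "F = 1 - 2 * \<mu> * R"
    and "X = x * ((2 + s * (p - 1)) / (4 * s * p))"
  define a b \<beta> where "a = u * pu" and "b = R * pR" and "\<beta> = b\<^sup>2 / x"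
  define K where "K = F * (X * ((2 - x)\<^sup>2 - 2 * \<mu> * R * x\<^sup>2) - x * (1 - x))"
  have x0: "x > 0" using u R by (simp add: x_def mult_neg_pos)
  have y': "99/100 \<le> x / s" "x / s \<le> 101/100" using y by (simp_all add: x_def)
  have "x \<le> 101/100 * s" using y' s by (simp add: divide_le_eq)
  then have x1: "x \<le> 101/100" using s by linarith
  define w where "w = (2 + s * (p - 1)) / (4 * p)"
  have Xw: "X = (x / s) * w" using s p by (simp add: X_def w_def field_simps)
  have "s * (p - 1) \<le> 1 * (1/1000)" using s p by (intro mult_mono) auto
  moreover have "0 \<le> s * (p - 1)" using s p by simp
  ultimately have w: "4995/10000 \<le> w" "w \<le> 50025/100000"
    using p by (simp_all add: w_def le_divide_eq divide_le_eq)
  have "99/100 * (4995/10000) \<le> (x / s) * w"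
    using y' w by (intro mult_mono) (auto intro: order_trans[OF _ y'(1)])
  moreover have "(x / s) * w \<le> 101/100 * (50025/100000)" using y' w by (intro mult_mono) auto
  ultimately have X: "49/100 \<le> X" "X \<le> 51/100" using Xw by simp_all
  have F: "9998/10000 \<le> F" "F \<le> 1" using q \<mu> R by (auto simp: F_def)
  have q': "0 \<le> 2 * \<mu> * R" using \<mu> R by simp
  have I_eq: "I = a\<^sup>2 + \<beta> + G"
    using u R by (simp add: I_def a_def \<beta>_def b_def x_def field_simps power2_eq_square)
  have E_eq: "E = a\<^sup>2 - x * F * (a * b) + K * \<beta> + (x * F * X + 1 - x) * G"
    using x0 s p u unfolding E_def K_def \<beta>_def X_def F_def a_def b_def x_def
    by (simp add: field_simps power2_eq_square power3_eq_cube)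
  have cross: "(x * F)\<^sup>2 * b\<^sup>2 = x ^ 3 * F\<^sup>2 * \<beta>"
    using x0 by (simp add: \<beta>_def power2_eq_square power3_eq_cube)
  have \<beta>: "\<beta> \<ge> 0" using x0 by (simp add: \<beta>_def)
  note K_bounds = radial_coefficient_bounds[OF x0 x1 X F q' q, folded K_def]
  note \<Gamma>_bounds = angular_coefficient_bounds[OF x0 x1 X F]
  have "1/100 * \<beta> \<le> (K - x ^ 3 * F\<^sup>2 / 3) * \<beta>" "(K + x ^ 3 * F\<^sup>2 / 2) * \<beta> \<le> 5 * \<beta>"
    using mult_right_mono[OF K_bounds(1) \<beta>] mult_right_mono[OF K_bounds(2) \<beta>] .
  moreover have "1/100 * G \<le> (x * F * X + 1 - x) * G" "(x * F * X + 1 - x) * G \<le> 5 * G"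
    using mult_right_mono[OF \<Gamma>_bounds(1) G] mult_right_mono[OF \<Gamma>_bounds(2) G] .
  moreover note cross_term_bounds[of "x * F" a b, unfolded cross]
  ultimately show ?thesis
    unfolding I_eq E_eq
    by (simp add: algebra_simps) (insert zero_le_power2[of a], argo)
qed

lemma filterlim_graph_at:
  fixes \<rho> :: "real \<Rightarrow> real"
  assumes "\<forall>\<^sub>F y in at \<tau>. \<bar>\<rho> y - \<rho> \<tau>\<bar> \<le> L * \<bar>y - \<tau>\<bar>"
  shows "filterlim (\<lambda>y. (y, \<rho> y)) (at (\<tau>, \<rho> \<tau>)) (at \<tau>)"
proof -
  have "((\<lambda>y. \<rho> y - \<rho> \<tau>) \<longlongrightarrow> 0) (at \<tau>)"
  proof (rule Lim_null_comparison)
    show "\<forall>\<^sub>F y in at \<tau>. norm (\<rho> y - \<rho> \<tau>) \<le> L * \<bar>y - \<tau>\<bar>" using assms by simp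
    show "((\<lambda>y. L * \<bar>y - \<tau>\<bar>) \<longlongrightarrow> 0) (at \<tau>)"
      by (intro tendsto_eq_intros) auto
  qed
  then have "((\<lambda>y. (y, \<rho> y)) \<longlongrightarrow> (\<tau>, \<rho> \<tau>)) (at \<tau>)"
    by (intro tendsto_Pair tendsto_ident_at) (simp add: LIM_zero_cancel)
  then show ?thesis
    unfolding filterlim_at using eventually_neq_at_within[of \<tau> \<tau> UNIV]
    by (auto elim: eventually_mono)
qed

lemma linearization_error_bound:
  fixes a b h k L :: real
  assumes b: "b \<noteq> 0" and h: "h \<noteq> 0" and k: "\<bar>k\<bar> \<le> L * \<bar>h\<bar>"
  shows "\<bar>k - (- a / b) * h\<bar> / \<bar>h\<bar> \<le> (1 + L) / \<bar>b\<bar> * (\<bar>a * h + b * k\<bar> / norm (h, k))"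
proof -
  have "norm (h, k) \<le> \<bar>h\<bar> + \<bar>k\<bar>" using norm_Pair_le[of h k] by simp
  also have "\<dots> \<le> (1 + L) * \<bar>h\<bar>" using k by (simp add: algebra_simps)
  finally have hk: "norm (h, k) \<le> (1 + L) * \<bar>h\<bar>" .
  have hk0: "norm (h, k) > 0" using h by (auto simp: zero_prod_def)
  have "k - (- a / b) * h = (a * h + b * k) / b" using b by (simp add: field_simps)
  then have "\<bar>k - (- a / b) * h\<bar> / \<bar>h\<bar> = \<bar>a * h + b * k\<bar> / \<bar>b\<bar> * (1 / \<bar>h\<bar>)"
    by (simp add: abs_divide)
  also have "\<dots> \<le> \<bar>a * h + b * k\<bar> / \<bar>b\<bar> * ((1 + L) / norm (h, k))"
    using hk h hk0 by (intro mult_left_mono) (simp_all add: divide_simps)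
  also have "\<dots> = (1 + L) / \<bar>b\<bar> * (\<bar>a * h + b * k\<bar> / norm (h, k))" by simp
  finally show ?thesis .
qed

lemma level_curve_has_real_derivative:
  fixes G :: "real \<times> real \<Rightarrow> real" and \<rho> :: "real \<Rightarrow> real"
  assumes G: "(G has_derivative (\<lambda>(h, k). a * h + b * k)) (at (\<tau>, \<rho> \<tau>))" and b: "b \<noteq> 0"
    and level: "\<forall>\<^sub>F y in at \<tau>. G (y, \<rho> y) = G (\<tau>, \<rho> \<tau>)"
    and lip: "\<forall>\<^sub>F y in at \<tau>. \<bar>\<rho> y - \<rho> \<tau>\<bar> \<le> L * \<bar>y - \<tau>\<bar>"
  shows "(\<rho> has_real_derivative - a / b) (at \<tau>)"
proof -
  define D where "D = (\<lambda>(h, k). a * h + b * k :: real)"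
  define ratio where "ratio p = norm (G p - G (\<tau>, \<rho> \<tau>) - D (p - (\<tau>, \<rho> \<tau>))) / norm (p - (\<tau>, \<rho> \<tau>))"
    for p
  have "(ratio \<longlongrightarrow> 0) (at (\<tau>, \<rho> \<tau>))"
    using G unfolding has_derivative_iff_norm ratio_def D_def by blast
  moreover have "filterlim (\<lambda>y. (y, \<rho> y)) (at (\<tau>, \<rho> \<tau>)) (at \<tau>)"
    using lip by (rule filterlim_graph_at)
  ultimately have ratio_lim: "((\<lambda>y. ratio (y, \<rho> y)) \<longlongrightarrow> 0) (at \<tau>)"
    by (rule filterlim_compose[of ratio])
  have "((\<lambda>y. norm (\<rho> y - \<rho> \<tau> - (- a / b) * (y - \<tau>)) / norm (y - \<tau>)) \<longlongrightarrow> 0) (at \<tau>)"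
  proof (rule Lim_null_comparison)
    show "((\<lambda>y. (1 + L) / \<bar>b\<bar> * ratio (y, \<rho> y)) \<longlongrightarrow> 0) (at \<tau>)"
      by (rule tendsto_mult_right_zero[OF ratio_lim])
    show "\<forall>\<^sub>F y in at \<tau>. norm (norm (\<rho> y - \<rho> \<tau> - (- a / b) * (y - \<tau>)) / norm (y - \<tau>))
        \<le> (1 + L) / \<bar>b\<bar> * ratio (y, \<rho> y)"
      using level lip eventually_neq_at_within[of \<tau> \<tau> UNIV]
    proof eventually_elim
      case (elim y)
      define h k where "h = y - \<tau>" and "k = \<rho> y - \<rho> \<tau>"
      have "(y, \<rho> y) - (\<tau>, \<rho> \<tau>) = (h, k)" by (simp add: h_def k_def)
      moreover have "G (y, \<rho> y) - G (\<tau>, \<rho> \<tau>) - D (h, k) = - (a * h + b * k)"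
        using elim(1) by (simp add: D_def)
      ultimately have "ratio (y, \<rho> y) = \<bar>a * h + b * k\<bar> / norm (h, k)"
        unfolding ratio_def by (simp only: norm_minus_cancel real_norm_def abs_minus_cancel)
      then show ?case
        using linearization_error_bound[OF b, of h k L a] elim(2,3) by (simp add: h_def k_def)
    qed
  qed
  then show ?thesis
    unfolding has_field_derivative_def has_derivative_iff_norm
    using bounded_linear_mult_right by blast
qed

lemma set_integral_comparable:
  fixes f g :: "'a::euclidean_space \<Rightarrow> real"
  assumes A: "A \<in> sets borel" and g: "continuous_on A g" and f: "set_integrable lborel A f"
    and bounds: "\<And>x. x \<in> A \<Longrightarrow> c * f x \<le> g x \<and> g x \<le> C * f x"
  shows "set_integrable lborel A g
    \<and> c * (LINT x:A|lborel. f x) \<le> (LINT x:A|lborel. g x)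
    \<and> (LINT x:A|lborel. g x) \<le> C * (LINT x:A|lborel. f x)"
proof -
  have bound: "norm (indicator A x *\<^sub>R g x) \<le> (\<bar>c\<bar> + \<bar>C\<bar>) * norm (indicator A x *\<^sub>R f x)" for x
  proof (cases "x \<in> A")
    case True
    have "c * f x \<ge> - (\<bar>c\<bar> * \<bar>f x\<bar>)" "C * f x \<le> \<bar>C\<bar> * \<bar>f x\<bar>"
      by (metis abs_ge_minus_self abs_mult minus_le_iff, metis abs_ge_self abs_mult)
    moreover have "0 \<le> \<bar>c\<bar> * \<bar>f x\<bar>" "0 \<le> \<bar>C\<bar> * \<bar>f x\<bar>" by simp_all
    ultimately have "\<bar>g x\<bar> \<le> (\<bar>c\<bar> + \<bar>C\<bar>) * \<bar>f x\<bar>"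
      using bounds[OF True] by (simp only: abs_le_iff distrib_right) linarith
    then show ?thesis using True by simp
  qed simp
  have g_int: "set_integrable lborel A g"
    unfolding set_integrable_def
  proof (rule Bochner_Integration.integrable_bound)
    show "integrable lborel (\<lambda>x. (\<bar>c\<bar> + \<bar>C\<bar>) * norm (indicator A x *\<^sub>R f x))"
      using f unfolding set_integrable_def by (intro integrable_mult_right integrable_norm)
    show "(\<lambda>x. indicator A x *\<^sub>R g x) \<in> borel_measurable lborel"
      using borel_measurable_continuous_on_indicator[OF A g] by simp
    show "AE x in lborel. norm (indicator A x *\<^sub>R g x)
        \<le> norm ((\<bar>c\<bar> + \<bar>C\<bar>) * norm (indicator A x *\<^sub>R f x))"
      by (intro AE_I2 order_trans[OF bound]) simp
  qed
  have "(LINT x:A|lborel. c * f x) \<le> (LINT x:A|lborel. g x)"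
    using bounds by (intro set_integral_mono set_integrable_mult_right f g_int) auto
  moreover have "(LINT x:A|lborel. g x) \<le> (LINT x:A|lborel. C * f x)"
    using bounds by (intro set_integral_mono set_integrable_mult_right f g_int) auto
  ultimately show ?thesis using g_int by (simp only: set_integral_mult_right)
qed

lemma bounds_from_limit_at_bot:
  fixes g H g' H' :: "real \<Rightarrow> real"
  assumes lim: "(g \<longlongrightarrow> 0) at_bot"
    and g: "\<And>\<tau>. \<tau> \<le> t \<Longrightarrow> (g has_real_derivative g' \<tau>) (at \<tau>)"
    and H: "\<And>\<tau>. \<tau> \<le> t \<Longrightarrow> (H has_real_derivative H' \<tau>) (at \<tau>)"
    and slope: "\<And>\<tau>. \<tau> \<le> t \<Longrightarrow> 0 \<le> g' \<tau> \<and> g' \<tau> \<le> H' \<tau>"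
    and oscillation: "\<And>\<tau>. \<tau> \<le> t \<Longrightarrow> H t - H \<tau> \<le> C"
  shows "0 \<le> g t \<and> g t \<le> C"
proof -
  have "g \<tau> \<le> g t" if "\<tau> \<le> t" for \<tau>
    by (rule DERIV_nonneg_imp_nondecreasing[OF that]) (use g slope in force)
  then have "\<forall>\<^sub>F \<tau> in at_bot. g \<tau> \<le> g t" by (rule eventually_at_bot_linorderI)
  then have "0 \<le> g t" by (rule tendsto_upperbound[OF lim]) simp
  moreover have "g t - C \<le> g \<tau>" if "\<tau> \<le> t" for \<tau>
  proof -
    have "g t - H t \<le> g \<tau> - H \<tau>"
    proof (rule DERIV_nonpos_imp_nonincreasing[OF that, of "\<lambda>x. g x - H x"])
      fix x assume "\<tau> \<le> x" "x \<le> t"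
      then show "\<exists>y. ((\<lambda>x. g x - H x) has_real_derivative y) (at x) \<and> y \<le> 0"
        using DERIV_diff[OF g H] slope by force
    qed
    then show ?thesis using oscillation[OF that] by linarith
  qed
  then have "\<forall>\<^sub>F \<tau> in at_bot. g t - C \<le> g \<tau>" by (rule eventually_at_bot_linorderI)
  then have "g t - C \<le> 0" by (rule tendsto_lowerbound[OF lim]) simp
  ultimately show ?thesis by simp
qed

lemma norm_sph: "norm (sph th vp) = 1"
proof -
  have "(sin th)\<^sup>2 * (cos vp)\<^sup>2 + (sin th)\<^sup>2 * (sin vp)\<^sup>2 + (cos th)\<^sup>2
      = (sin th)\<^sup>2 * ((sin vp)\<^sup>2 + (cos vp)\<^sup>2) + (cos th)\<^sup>2"
    by algebra
  also have "\<dots> = 1" by simp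
  finally show ?thesis
    unfolding norm_vec_def L2_set_def sum_3 by (simp add: sph_def power_mult_distrib)
qed

lemma continuous_on_sph:
  fixes f g :: "'a::t2_space \<Rightarrow> real"
  assumes f: "continuous_on A f" and g: "continuous_on A g"
  shows "continuous_on A (\<lambda>q. sph (f q) (g q))"
proof -
  have "sph (f q) (g q) $ i = (if i = 1 then sin (f q) * cos (g q)
      else if i = 2 then sin (f q) * sin (g q) else cos (f q))" for q i
    using exhaust_3[of i] by (auto simp: sph_def)
  then have "sph (f q) (g q) = (\<chi> i. if i = 1 then sin (f q) * cos (g q)
      else if i = 2 then sin (f q) * sin (g q) else cos (f q))" for q
    by (simp add: vec_eq_iff)
  moreover have "continuous_on A (\<lambda>q. if i = 1 then sin (f q) * cos (g q)
      else if i = 2 then sin (f q) * sin (g q) else cos (f q))" for i :: 3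
    by (cases "i = 1"; cases "i = 2")
      (auto intro!: continuous_on_mult continuous_on_sin[OF f] continuous_on_cos[OF f]
        continuous_on_sin[OF g] continuous_on_cos[OF g])
  ultimately show ?thesis by (simp only:) (rule continuous_on_vec_lambda)
qed

lemma smooth_on_continuous_on_frechet_derivative:
  assumes "smooth_on S \<phi>" "e \<in> Basis"
  shows "continuous_on S (\<lambda>z. frechet_derivative \<phi> (at z) e)"
proof -
  have "Ck_on (Suc 0) S \<phi>" using assms(1) unfolding smooth_on_def by blast
  then show ?thesis using assms(2) by simp
qed

locale vaidya =
  fixes m :: "real \<Rightarrow> real" and \<psi> v :: "real \<Rightarrow> real \<Rightarrow> real"
  assumes m_smooth: "smooth_on UNIV m"
    and m_nonincr: "\<And>a b. a \<le> b \<Longrightarrow> m b \<le> m a"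
    and m_pos: "\<And>u. m u > 0"
    and m_bdd: "bounded (range m)"
    and psi_pos: "\<And>u r. (u, r) \<in> exterior m \<Longrightarrow> \<psi> u r > 0"
    and psi_eq: "\<And>u r. (u, r) \<in> exterior m \<Longrightarrow>
        \<exists>D. ((\<lambda>(a, b). \<psi> a b) has_derivative D) (at (u, r)) \<and>
            D (1, - Fr m u r / 2) + 2 * deriv m u / (Fr m u r * r) * \<psi> u r = 0"
    and psi_scri: "\<And>\<rho> \<tau>0. (\<forall>\<tau>\<le>\<tau>0. (\<tau>, \<rho> \<tau>) \<in> exterior m \<and>
                     (\<rho> has_real_derivative (- Fr m \<tau> (\<rho> \<tau>) / 2)) (at \<tau>))
        \<Longrightarrow> ((\<lambda>\<tau>. \<psi> \<tau> (\<rho> \<tau>)) \<longlongrightarrow> 1) at_bot"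
    and v_diff: "\<And>u r. (u, r) \<in> exterior m \<Longrightarrow>
        ((\<lambda>(a, b). v a b) has_derivative
           (\<lambda>(du, dr). \<psi> u r * du + 2 * \<psi> u r / Fr m u r * dr)) (at (u, r))"
begin

lemma exterior_iff: "(u, r) \<in> exterior m \<longleftrightarrow> r > 2 * m u"
  by (simp add: exterior_def)

definition mass_bound :: real where
  "mass_bound = max 1 (SUP u. m u)"

lemma mass_bound_ge_1: "mass_bound \<ge> 1"
  by (simp add: mass_bound_def)

lemma m_le_mass_bound: "m u \<le> mass_bound"
  unfolding mass_bound_def using cSUP_upper[OF UNIV_I bounded_imp_bdd_above[OF m_bdd]]
  by (simp add: le_max_iff_disj)

lemma exterior_if_far: "r > 2 * mass_bound \<Longrightarrow> (u, r) \<in> exterior m"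
  using m_le_mass_bound[of u] by (simp add: exterior_iff)

lemma Fr_pos: "(u, r) \<in> exterior m \<Longrightarrow> Fr m u r > 0"
  using m_pos[of u] by (simp add: exterior_iff Fr_def field_simps)

lemma Fr_le_1: "(u, r) \<in> exterior m \<Longrightarrow> Fr m u r \<le> 1"
  using m_pos[of u] by (simp add: exterior_iff Fr_def field_simps)

lemma m_has_real_derivative: "(m has_real_derivative deriv m u) (at u)"
proof -
  have "Ck_on (Suc 0) UNIV m" using m_smooth unfolding smooth_on_def by blast
  then show ?thesis using DERIV_deriv_iff_real_differentiable by simp
qed

lemma deriv_m_nonpos: "deriv m u \<le> 0"
proof (rule ccontr)
  assume "\<not> deriv m u \<le> 0"
  then obtain d where "d > 0" "\<forall>h>0. h < d \<longrightarrow> m u < m (u + h)"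
    using DERIV_pos_inc_right[OF m_has_real_derivative] by (metis not_le)
  then have "m u < m (u + d/2)" by auto
  moreover have "m (u + d/2) \<le> m u" using m_nonincr \<open>d > 0\<close> by auto
  ultimately show False by simp
qed

lemma continuous_on_m: "continuous_on A m"
  by (intro continuous_at_imp_continuous_on ballI DERIV_isCont[OF m_has_real_derivative])

lemma continuous_on_psi: "continuous_on (exterior m) (\<lambda>(a, b). \<psi> a b)"
proof (intro continuous_at_imp_continuous_on ballI)
  fix z assume "z \<in> exterior m"
  then obtain D where "((\<lambda>(a, b). \<psi> a b) has_derivative D) (at z)"
    using psi_eq by (cases z) blast
  then show "isCont (\<lambda>(a, b). \<psi> a b) z" by (rule has_derivative_continuous)
qed

lemma v_has_real_derivative_along_line:
  assumes "(\<tau>, a + b * \<tau>) \<in> exterior m"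
  shows "((\<lambda>t. v t (a + b * t)) has_real_derivative
     \<psi> \<tau> (a + b * \<tau>) + b * (2 * \<psi> \<tau> (a + b * \<tau>) / Fr m \<tau> (a + b * \<tau>))) (at \<tau>)"
proof -
  have inner: "((\<lambda>t. (t, a + b * t)) has_derivative (\<lambda>h. (h, b * h))) (at \<tau>)"
    by (auto intro!: derivative_eq_intros)
  have "((\<lambda>t. (\<lambda>(x, y). v x y) (t, a + b * t)) has_derivative
      (\<lambda>h. (\<lambda>(du, dr). \<psi> \<tau> (a + b * \<tau>) * du + 2 * \<psi> \<tau> (a + b * \<tau>) / Fr m \<tau> (a + b * \<tau>) * dr)
        (h, b * h))) (at \<tau>)"
    by (rule has_derivative_compose[OF inner v_diff[OF assms]])
  then have "((\<lambda>t. v t (a + b * t)) has_derivative (\<lambda>h. \<psi> \<tau> (a + b * \<tau>) * h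
      + 2 * \<psi> \<tau> (a + b * \<tau>) / Fr m \<tau> (a + b * \<tau>) * (b * h))) (at \<tau>)"
    by simp
  then show ?thesis unfolding has_field_derivative_def
    by (rule has_derivative_eq_rhs) (auto simp: fun_eq_iff algebra_simps)
qed

lemma v_has_real_derivative_r:
  assumes "(u, r) \<in> exterior m"
  shows "((\<lambda>x. v u x) has_real_derivative 2 * \<psi> u r / Fr m u r) (at r)"
proof -
  have inner: "((\<lambda>t. (u, t)) has_derivative (\<lambda>h. (0, h))) (at r)"
    by (auto intro!: derivative_eq_intros)
  have "((\<lambda>t. (\<lambda>(x, y). v x y) (u, t)) has_derivative
      (\<lambda>h. (\<lambda>(du, dr). \<psi> u r * du + 2 * \<psi> u r / Fr m u r * dr) (0, h))) (at r)"
    by (rule has_derivative_compose[OF inner v_diff[OF assms]])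
  then have "((\<lambda>t. v u t) has_derivative (\<lambda>h. 2 * \<psi> u r / Fr m u r * h)) (at r)"
    by simp
  then show ?thesis unfolding has_field_derivative_def
    by (rule has_derivative_eq_rhs) (auto simp: fun_eq_iff algebra_simps)
qed

lemma v_has_real_derivative_u:
  "r > 2 * mass_bound \<Longrightarrow> ((\<lambda>t. v t r) has_real_derivative \<psi> \<tau> r) (at \<tau>)"
  using v_has_real_derivative_along_line[of \<tau> r 0] exterior_if_far[of r \<tau>] by simp

lemma v_strict_mono_r:
  assumes "2 * m u < a" "a < b"
  shows "v u a < v u b"
proof (rule DERIV_pos_imp_increasing[OF assms(2)])
  fix x assume "a \<le> x" "x \<le> b"
  then have ex: "(u, x) \<in> exterior m" using assms by (simp add: exterior_iff)
  show "\<exists>y. ((\<lambda>x. v u x) has_real_derivative y) (at x) \<and> 0 < y"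
    using v_has_real_derivative_r[OF ex] psi_pos[OF ex] Fr_pos[OF ex]
    by (intro exI[of _ "2 * \<psi> u x / Fr m u x"] conjI) auto
qed

lemma v_inj_r: "2 * m u < a \<Longrightarrow> 2 * m u < b \<Longrightarrow> v u a = v u b \<Longrightarrow> a = b"
  using v_strict_mono_r[of u a b] v_strict_mono_r[of u b a] by (cases a b rule: linorder_cases) auto

lemma continuous_on_v_r: "2 * m u < a \<Longrightarrow> continuous_on {a..b} (v u)"
  using DERIV_isCont[OF v_has_real_derivative_r]
  by (intro continuous_at_imp_continuous_on ballI) (simp add: exterior_iff)

lemma v_strict_mono_u:
  assumes "2 * mass_bound < r" "a < b"
  shows "v a r < v b r"
proof (rule DERIV_pos_imp_increasing[OF assms(2)])
  fix x
  show "\<exists>y. ((\<lambda>t. v t r) has_real_derivative y) (at x) \<and> 0 < y"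
    using v_has_real_derivative_u[OF assms(1)] psi_pos[OF exterior_if_far[OF assms(1)]] by blast
qed

lemma v_mono_u: "2 * mass_bound < r \<Longrightarrow> a \<le> b \<Longrightarrow> v a r \<le> v b r"
  using v_strict_mono_u[of r a b] by (cases "a = b") auto

lemma v_antimono_along_ingoing_line:
  assumes "a \<le> b" and far: "\<And>t. a \<le> t \<Longrightarrow> t \<le> b \<Longrightarrow> 2 * mass_bound < c - t / 2"
  shows "v b (c - b / 2) \<le> v a (c - a / 2)"
proof -
  have "v b (c + (-1/2) * b) \<le> v a (c + (-1/2) * a)"
  proof (rule DERIV_nonpos_imp_nonincreasing[OF assms(1), of "\<lambda>t. v t (c + (-1/2) * t)"])
    fix x assume x: "a \<le> x" "x \<le> b"
    define r where "r = c + (-1/2) * x"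
    have ex: "(x, r) \<in> exterior m" using exterior_if_far far[OF x] by (simp add: r_def)
    have "\<psi> x r \<le> \<psi> x r / Fr m x r"
      using psi_pos[OF ex] Fr_pos[OF ex] Fr_le_1[OF ex] by (simp add: le_divide_eq)
    then have "\<psi> x r + (-1/2) * (2 * \<psi> x r / Fr m x r) \<le> 0" by simp
    then show "\<exists>y. ((\<lambda>t. v t (c + (-1/2) * t)) has_real_derivative y) (at x) \<and> y \<le> 0"
      using v_has_real_derivative_along_line[OF ex[unfolded r_def]] by (auto simp: r_def)
  qed
  then show ?thesis by simp
qed

text \<open>Since \<open>dv(1, -F/2) = \<psi> - \<psi> = 0\<close>, the integral curves of \<open>\<partial>\<^sub>u - (F/2) \<partial>\<^sub>r\<close> are the level
  curves of \<open>v\<close>; the one through \<open>(u\<^sub>1, r\<^sub>1)\<close> is obtained by solving \<open>v \<tau> r = v u\<^sub>1 r\<^sub>1\<close> for \<open>r\<close>.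
  It is constructed for \<open>\<tau> \<le> u\<^sub>1 + 1\<close>, slightly past \<open>u\<^sub>1\<close>, so that it is differentiable at \<open>u\<^sub>1\<close>.\<close>

definition characteristic :: "real \<Rightarrow> real \<Rightarrow> real \<Rightarrow> real" where
  "characteristic u1 r1 \<tau> = (THE r. 2 * mass_bound < r \<and> v \<tau> r = v u1 r1)"

lemma characteristic_exists:
  assumes r1: "r1 \<ge> 4 * mass_bound + 1" and \<tau>: "\<tau> \<le> u1 + 1"
  shows "\<exists>r. 2 * mass_bound < r \<and> v \<tau> r = v u1 r1 \<and> (\<tau> \<le> u1 \<longrightarrow> r1 \<le> r)"
proof -
  define c where "c = r1 + u1 / 2"
  have M: "mass_bound \<ge> 1" "2 * m \<tau> \<le> 2 * mass_bound"
    using mass_bound_ge_1 m_le_mass_bound by auto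
  show ?thesis
  proof (cases "\<tau> \<le> u1")
    case True
    have "v \<tau> r1 \<le> v u1 r1" using v_mono_u[of r1 \<tau> u1] True r1 M by simp
    moreover have "v u1 (c - u1 / 2) \<le> v \<tau> (c - \<tau> / 2)"
      by (rule v_antimono_along_ingoing_line[OF True]) (use r1 M in \<open>auto simp: c_def\<close>)
    ultimately obtain r where "r1 \<le> r" "r \<le> c - \<tau> / 2" "v \<tau> r = v u1 r1"
      using IVT'[of "v \<tau>" r1 "v u1 r1" "c - \<tau> / 2"] continuous_on_v_r[of \<tau> r1 "c - \<tau> / 2"]
        True r1 M by (auto simp: c_def)
    then show ?thesis using r1 M True by (intro exI[of _ r]) auto
  next
    case False
    have "v u1 r1 \<le> v \<tau> r1" using v_mono_u[of r1 u1 \<tau>] False r1 M by simp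
    moreover have "v \<tau> (c - \<tau> / 2) \<le> v u1 (c - u1 / 2)"
      by (rule v_antimono_along_ingoing_line) (use r1 M False \<tau> in \<open>auto simp: c_def\<close>)
    ultimately obtain r where "c - \<tau> / 2 \<le> r" "r \<le> r1" "v \<tau> r = v u1 r1"
      using IVT'[of "v \<tau>" "c - \<tau> / 2" "v u1 r1" r1] continuous_on_v_r[of \<tau> "c - \<tau> / 2" r1]
        False r1 M \<tau> by (auto simp: c_def)
    moreover have "2 * mass_bound < c - \<tau> / 2" using r1 M \<tau> by (simp add: c_def)
    ultimately show ?thesis using False by (intro exI[of _ r]) auto
  qed
qed

lemma characteristicD:
  assumes "r1 \<ge> 4 * mass_bound + 1" and "\<tau> \<le> u1 + 1"
  shows "2 * mass_bound < characteristic u1 r1 \<tau>" "v \<tau> (characteristic u1 r1 \<tau>) = v u1 r1"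
    and "\<tau> \<le> u1 \<Longrightarrow> r1 \<le> characteristic u1 r1 \<tau>"
proof -
  obtain r where r: "2 * mass_bound < r" "v \<tau> r = v u1 r1" "\<tau> \<le> u1 \<longrightarrow> r1 \<le> r"
    using characteristic_exists[OF assms] by blast
  have "characteristic u1 r1 \<tau> = r" unfolding characteristic_def
  proof (rule the_equality)
    show "\<And>r'. 2 * mass_bound < r' \<and> v \<tau> r' = v u1 r1 \<Longrightarrow> r' = r"
      using r v_inj_r[of \<tau>] m_le_mass_bound[of \<tau>] by force
  qed (use r in auto)
  then show "2 * mass_bound < characteristic u1 r1 \<tau>" "v \<tau> (characteristic u1 r1 \<tau>) = v u1 r1"
    and "\<tau> \<le> u1 \<Longrightarrow> r1 \<le> characteristic u1 r1 \<tau>"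
    using r by auto
qed

lemma characteristic_start:
  assumes r1: "r1 \<ge> 4 * mass_bound + 1"
  shows "characteristic u1 r1 u1 = r1"
proof (rule v_inj_r[of u1])
  have "u1 \<le> u1 + 1" by simp
  note c = characteristicD(1,2)[OF r1 this]
  show "2 * m u1 < characteristic u1 r1 u1" "2 * m u1 < r1"
    using c m_le_mass_bound[of u1] r1 mass_bound_ge_1 by auto
  show "v u1 (characteristic u1 r1 u1) = v u1 r1" by (rule c(2))
qed

text \<open>The characteristic moves outwards as \<open>\<tau>\<close> decreases, but no faster than the line
  \<open>r + \<tau>/2 = const\<close> along which \<open>v\<close> is monotone.\<close>

lemma characteristic_lipschitz:
  assumes r1: "r1 \<ge> 4 * mass_bound + 1" and \<tau>: "\<tau> \<le> u1 + 1" and \<tau>': "\<tau>' \<le> u1 + 1"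
  shows "\<bar>characteristic u1 r1 \<tau>' - characteristic u1 r1 \<tau>\<bar> \<le> \<bar>\<tau>' - \<tau>\<bar> / 2"
proof -
  have *: "characteristic u1 r1 b \<le> characteristic u1 r1 a
      \<and> characteristic u1 r1 a \<le> characteristic u1 r1 b + (b - a) / 2"
    if ab: "a < b" "b \<le> u1 + 1" for a b
  proof -
    let ?a = "characteristic u1 r1 a" and ?b = "characteristic u1 r1 b"
    have A: "2 * mass_bound < ?a" "v a ?a = v u1 r1" using characteristicD[OF r1] ab by auto
    have B: "2 * mass_bound < ?b" "v b ?b = v u1 r1" using characteristicD[OF r1] ab by auto
    have "?b \<le> ?a"
    proof (rule ccontr)
      assume "\<not> ?b \<le> ?a"
      then have "v a ?a < v a ?b" using v_strict_mono_r[of a ?a ?b] A m_le_mass_bound[of a] by simp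
      then show False using v_strict_mono_u[OF B(1) ab(1)] A B by simp
    qed
    moreover have "?a \<le> ?b + (b - a) / 2"
    proof (rule ccontr)
      assume c: "\<not> ?a \<le> ?b + (b - a) / 2"
      define c0 where "c0 = ?b + b / 2"
      have "v b (c0 - b / 2) \<le> v a (c0 - a / 2)"
        by (rule v_antimono_along_ingoing_line) (use ab B in \<open>auto simp: c0_def\<close>)
      moreover have "v a (c0 - a / 2) < v a ?a"
        by (rule v_strict_mono_r)
          (use c B ab m_le_mass_bound[of a] in \<open>auto simp: c0_def diff_divide_distrib\<close>)
      ultimately show False using A B by (simp add: c0_def)
    qed
    ultimately show ?thesis by simp
  qed
  show ?thesis
    using *[of \<tau> \<tau>'] *[of \<tau>' \<tau>] \<tau> \<tau>'
    by (cases \<tau> \<tau>' rule: linorder_cases) (auto simp: abs_if field_simps)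
qed

lemma characteristic_has_real_derivative:
  assumes r1: "r1 \<ge> 4 * mass_bound + 1" and \<tau>: "\<tau> < u1 + 1"
  shows "(characteristic u1 r1 has_real_derivative - Fr m \<tau> (characteristic u1 r1 \<tau>) / 2) (at \<tau>)"
proof -
  define \<rho> where "\<rho> = characteristic u1 r1"
  have ex: "(\<tau>, \<rho> \<tau>) \<in> exterior m"
    using exterior_if_far characteristicD(1)[OF r1] \<tau> by (simp add: \<rho>_def)
  have near: "\<forall>\<^sub>F y in at \<tau>. y < u1 + 1"
    using order_tendstoD(2)[OF tendsto_ident_at \<tau>] .
  have "(\<rho> has_real_derivative - \<psi> \<tau> (\<rho> \<tau>) / (2 * \<psi> \<tau> (\<rho> \<tau>) / Fr m \<tau> (\<rho> \<tau>))) (at \<tau>)"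
  proof (rule level_curve_has_real_derivative[where G = "\<lambda>(a, b). v a b" and L = "1/2"])
    show "((\<lambda>(a, b). v a b) has_derivative
        (\<lambda>(h, k). \<psi> \<tau> (\<rho> \<tau>) * h + 2 * \<psi> \<tau> (\<rho> \<tau>) / Fr m \<tau> (\<rho> \<tau>) * k)) (at (\<tau>, \<rho> \<tau>))"
      by (rule v_diff[OF ex])
    show "2 * \<psi> \<tau> (\<rho> \<tau>) / Fr m \<tau> (\<rho> \<tau>) \<noteq> 0"
      using psi_pos[OF ex] Fr_pos[OF ex] by simp
    show "\<forall>\<^sub>F y in at \<tau>. (\<lambda>(a, b). v a b) (y, \<rho> y) = (\<lambda>(a, b). v a b) (\<tau>, \<rho> \<tau>)"
      using near by eventually_elim (use characteristicD(2)[OF r1] \<tau> in \<open>simp add: \<rho>_def\<close>)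
    show "\<forall>\<^sub>F y in at \<tau>. \<bar>\<rho> y - \<rho> \<tau>\<bar> \<le> 1/2 * \<bar>y - \<tau>\<bar>"
      using near by eventually_elim (use characteristic_lipschitz[OF r1] \<tau> in \<open>simp add: \<rho>_def\<close>)
  qed
  then show ?thesis
    using psi_pos[OF ex] Fr_pos[OF ex] by (simp add: \<rho>_def field_simps)
qed

lemma ln_psi_along_characteristic_has_real_derivative:
  assumes r1: "r1 \<ge> 4 * mass_bound + 1" and \<tau>: "\<tau> \<le> u1"
  defines "\<rho> \<equiv> characteristic u1 r1"
  shows "((\<lambda>t. ln (\<psi> t (\<rho> t))) has_real_derivative - 2 * deriv m \<tau> / (\<rho> \<tau> - 2 * m \<tau>)) (at \<tau>)"
proof -
  define F where "F = Fr m \<tau> (\<rho> \<tau>)"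
  have ex: "(\<tau>, \<rho> \<tau>) \<in> exterior m"
    using exterior_if_far characteristicD(1)[OF r1] \<tau> by (simp add: \<rho>_def)
  obtain D where D: "((\<lambda>(a, b). \<psi> a b) has_derivative D) (at (\<tau>, \<rho> \<tau>))"
    and transport: "D (1, - F / 2) + 2 * deriv m \<tau> / (F * \<rho> \<tau>) * \<psi> \<tau> (\<rho> \<tau>) = 0"
    using psi_eq[OF ex] unfolding F_def by blast
  have "\<tau> < u1 + 1" using \<tau> by simp
  from characteristic_has_real_derivative[OF r1 this]
  have "(\<rho> has_derivative (\<lambda>h. h *\<^sub>R (- F / 2))) (at \<tau>)"
    unfolding has_field_derivative_def \<rho>_def F_def
    by (rule has_derivative_eq_rhs) (simp add: fun_eq_iff)
  then have "((\<lambda>t. (t, \<rho> t)) has_derivative (\<lambda>h. h *\<^sub>R (1, - F / 2))) (at \<tau>)"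
    using has_derivative_Pair[OF has_derivative_ident] by simp
  from has_derivative_compose[OF this D]
  have "((\<lambda>t. \<psi> t (\<rho> t)) has_derivative (\<lambda>h. D (h *\<^sub>R (1, - F / 2)))) (at \<tau>)"
    by simp
  then have "((\<lambda>t. \<psi> t (\<rho> t)) has_real_derivative D (1, - F / 2)) (at \<tau>)"
    unfolding has_field_derivative_def
    by (rule has_derivative_eq_rhs)
      (simp only: fun_eq_iff linear_scale[OF has_derivative_linear[OF D]] real_scaleR_def
        mult.commute, simp)
  then have "((\<lambda>t. ln (\<psi> t (\<rho> t))) has_real_derivative D (1, - F / 2) / \<psi> \<tau> (\<rho> \<tau>)) (at \<tau>)"
    using psi_pos[OF ex] by (auto intro!: derivative_eq_intros)
  moreover have "D (1, - F / 2) / \<psi> \<tau> (\<rho> \<tau>) = - 2 * deriv m \<tau> / (F * \<rho> \<tau>)"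
    using transport[folded eq_neg_iff_add_eq_0] psi_pos[OF ex] by simp
  moreover have "F * \<rho> \<tau> = \<rho> \<tau> - 2 * m \<tau>"
    using ex m_pos[of \<tau>] by (simp add: F_def Fr_def exterior_iff field_simps)
  ultimately show ?thesis by simp
qed

lemma psi_bounds:
  assumes r1: "r1 \<ge> 4 * mass_bound + 1"
  shows "1 \<le> \<psi> u1 r1 \<and> \<psi> u1 r1 \<le> exp (4 * mass_bound / r1)"
proof -
  define \<rho> where "\<rho> = characteristic u1 r1"
  have M: "mass_bound \<ge> 1" by (rule mass_bound_ge_1)
  have "0 \<le> ln (\<psi> u1 (\<rho> u1)) \<and> ln (\<psi> u1 (\<rho> u1)) \<le> 4 * mass_bound / r1"
  proof (rule bounds_from_limit_at_bot[where g = "\<lambda>\<tau>. ln (\<psi> \<tau> (\<rho> \<tau>))" and t = u1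
        and g' = "\<lambda>\<tau>. - 2 * deriv m \<tau> / (\<rho> \<tau> - 2 * m \<tau>)"
        and H = "\<lambda>\<tau>. - 4 * m \<tau> / r1" and H' = "\<lambda>\<tau>. - 4 * deriv m \<tau> / r1"])
    have "\<forall>\<tau>\<le>u1. (\<tau>, \<rho> \<tau>) \<in> exterior m
        \<and> (\<rho> has_real_derivative - Fr m \<tau> (\<rho> \<tau>) / 2) (at \<tau>)"
      using exterior_if_far characteristicD(1)[OF r1] characteristic_has_real_derivative[OF r1]
      by (simp add: \<rho>_def)
    then show "((\<lambda>\<tau>. ln (\<psi> \<tau> (\<rho> \<tau>))) \<longlongrightarrow> 0) at_bot"
      using tendsto_ln[OF psi_scri] by fastforce
    show "((\<lambda>\<tau>. ln (\<psi> \<tau> (\<rho> \<tau>))) has_real_derivative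
        - 2 * deriv m \<tau> / (\<rho> \<tau> - 2 * m \<tau>)) (at \<tau>)" if "\<tau> \<le> u1" for \<tau>
      using ln_psi_along_characteristic_has_real_derivative[OF r1 that] by (simp add: \<rho>_def)
    show "((\<lambda>\<tau>. - 4 * m \<tau> / r1) has_real_derivative - 4 * deriv m \<tau> / r1) (at \<tau>)" for \<tau>
      using m_has_real_derivative r1 M by (auto intro!: derivative_eq_intros)
    show "0 \<le> - 2 * deriv m \<tau> / (\<rho> \<tau> - 2 * m \<tau>)
        \<and> - 2 * deriv m \<tau> / (\<rho> \<tau> - 2 * m \<tau>) \<le> - 4 * deriv m \<tau> / r1" if "\<tau> \<le> u1" for \<tau>
    proof -
      have far: "r1 / 2 \<le> \<rho> \<tau> - 2 * m \<tau>"
        using characteristicD(3)[OF r1 _ that] m_le_mass_bound[of \<tau>] r1 that by (simp add: \<rho>_def)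
      have "0 \<le> - 2 * deriv m \<tau> / (\<rho> \<tau> - 2 * m \<tau>)"
        using far deriv_m_nonpos[of \<tau>] r1 M by (intro divide_nonneg_pos) auto
      moreover have "- 2 * deriv m \<tau> / (\<rho> \<tau> - 2 * m \<tau>) \<le> - 2 * deriv m \<tau> / (r1 / 2)"
        using far deriv_m_nonpos[of \<tau>] r1 M by (intro divide_left_mono) auto
      ultimately show ?thesis by simp
    qed
    show "- 4 * m u1 / r1 - - 4 * m \<tau> / r1 \<le> 4 * mass_bound / r1" for \<tau>
    proof -
      have "- 4 * m u1 / r1 - - 4 * m \<tau> / r1 = (4 * m \<tau> - 4 * m u1) / r1"
        by (simp add: diff_divide_distrib)
      also have "\<dots> \<le> 4 * mass_bound / r1"
        using m_le_mass_bound[of \<tau>] m_pos[of u1] r1 M by (intro divide_right_mono) auto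
      finally show ?thesis .
    qed
  qed
  moreover have "\<psi> u1 r1 > 0"
    using psi_pos exterior_if_far r1 M by simp
  ultimately show ?thesis
    using characteristic_start[OF r1] unfolding \<rho>_def
    by (metis exp_le_cancel_iff exp_ln ln_ge_zero_iff)
qed

text \<open>Beyond \<open>far_radius\<close>, \<open>F \<ge> 0.9998\<close> and \<open>1 \<le> \<psi> \<le> 1.001\<close>, so \<open>\<partial>\<^sub>u v \<approx> 1\<close> and \<open>\<partial>\<^sub>r v \<approx> 2\<close>.\<close>

definition far_radius :: real where
  "far_radius = 10000 * mass_bound"

lemma far_radius_ge:
  "far_radius \<ge> 4 * mass_bound + 1" "far_radius > 2 * mass_bound" "far_radius > 0"
  using mass_bound_ge_1 by (auto simp: far_radius_def)

lemma psi_far: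
  assumes r: "r \<ge> far_radius"
  shows "1 \<le> \<psi> u r \<and> \<psi> u r \<le> 1001/1000"
proof -
  have r1: "r \<ge> 4 * mass_bound + 1" and r0: "r > 0" using r far_radius_ge by linarith+
  have small: "0 \<le> 4 * mass_bound / r" "4 * mass_bound / r \<le> 4 / 10000"
    using r r0 mass_bound_ge_1 by (simp_all add: far_radius_def divide_le_eq)
  have "exp (4 * mass_bound / r) \<le> 1 + 2 * (4 * mass_bound / r)"
    by (rule real_exp_bound_lemma) (use small in auto)
  then show ?thesis using psi_bounds[OF r1, of u] small by simp
qed

lemma Fr_far: "r \<ge> far_radius \<Longrightarrow> 9998/10000 \<le> Fr m u r"
  using far_radius_ge(3) mass_bound_ge_1 m_le_mass_bound[of u]
  by (simp add: Fr_def far_radius_def divide_le_eq)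

lemma v_r_derivative_far:
  assumes r: "r \<ge> far_radius"
  shows "2 \<le> 2 * \<psi> u r / Fr m u r \<and> 2 * \<psi> u r / Fr m u r \<le> 2003/1000"
proof -
  have ex: "(u, r) \<in> exterior m" using exterior_if_far r far_radius_ge by force
  have F: "0 < Fr m u r" "Fr m u r \<le> 1" "9998/10000 \<le> Fr m u r"
    using Fr_pos[OF ex] Fr_le_1[OF ex] Fr_far[OF r] by auto
  have p: "1 \<le> \<psi> u r" "\<psi> u r \<le> 1001/1000" using psi_far[OF r] by auto
  then have "2 * \<psi> u r \<le> 2003/1000 * Fr m u r" using F by linarith
  then show ?thesis using F p by (simp add: le_divide_eq divide_le_eq)
qed

lemma v_increment_r_far:
  assumes "far_radius \<le> a" "a \<le> b"
  shows "2 * (b - a) \<le> v u b - v u a \<and> v u b - v u a \<le> 2003/1000 * (b - a)"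
proof -
  have v': "((\<lambda>x. v u x) has_real_derivative 2 * \<psi> u x / Fr m u x) (at x)" if "a \<le> x" for x
    using v_has_real_derivative_r[of u x] exterior_if_far[of x u] far_radius_ge that assms by force
  have "v u a - 2 * a \<le> v u b - 2 * b"
  proof (rule DERIV_nonneg_imp_nondecreasing[OF assms(2), of "\<lambda>x. v u x - 2 * x"])
    fix x assume x: "a \<le> x" "x \<le> b"
    show "\<exists>y. ((\<lambda>x. v u x - 2 * x) has_real_derivative y) (at x) \<and> 0 \<le> y"
      using DERIV_diff[OF v'[OF x(1)] DERIV_cmult[OF DERIV_ident, of 2]]
        v_r_derivative_far[of x u] x assms
      by (intro exI conjI) auto
  qed
  moreover have "2003/1000 * a - v u a \<le> 2003/1000 * b - v u b"
  proof (rule DERIV_nonneg_imp_nondecreasing[OF assms(2), of "\<lambda>x. 2003/1000 * x - v u x"])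
    fix x assume x: "a \<le> x" "x \<le> b"
    show "\<exists>y. ((\<lambda>x. 2003/1000 * x - v u x) has_real_derivative y) (at x) \<and> 0 \<le> y"
      using DERIV_diff[OF DERIV_cmult[OF DERIV_ident, of "2003/1000"] v'[OF x(1)]]
        v_r_derivative_far[of x u] x assms
      by (intro exI conjI) auto
  qed
  ultimately show ?thesis by (simp add: algebra_simps)
qed

lemma v_increment_u_far:
  assumes "far_radius \<le> r" "a \<le> b"
  shows "b - a \<le> v b r - v a r \<and> v b r - v a r \<le> 1001/1000 * (b - a)"
proof -
  have v': "((\<lambda>t. v t r) has_real_derivative \<psi> x r) (at x)" for x
    using v_has_real_derivative_u assms far_radius_ge by force
  have "v a r - a \<le> v b r - b"
  proof (rule DERIV_nonneg_imp_nondecreasing[OF assms(2), of "\<lambda>t. v t r - t"])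
    fix x
    show "\<exists>y. ((\<lambda>t. v t r - t) has_real_derivative y) (at x) \<and> 0 \<le> y"
      using DERIV_diff[OF v' DERIV_ident] psi_far[OF assms(1), of x] by (intro exI conjI) auto
  qed
  moreover have "1001/1000 * a - v a r \<le> 1001/1000 * b - v b r"
  proof (rule DERIV_nonneg_imp_nondecreasing[OF assms(2), of "\<lambda>t. 1001/1000 * t - v t r"])
    fix x
    show "\<exists>y. ((\<lambda>t. 1001/1000 * t - v t r) has_real_derivative y) (at x) \<and> 0 \<le> y"
      using DERIV_diff[OF DERIV_cmult[OF DERIV_ident, of "1001/1000"] v'] psi_far[OF assms(1), of x]
      by (intro exI conjI) auto
  qed
  ultimately show ?thesis by (simp add: algebra_simps)
qed

text \<open>For \<open>u < u_threshold\<close> the additive constant \<open>v 0 far_radius\<close> in \<open>v \<approx> u + 2r\<close> is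
  negligible against \<open>|u|\<close>, so on \<open>\<H>\<^sub>s\<close> we get \<open>r \<approx> |u|/s\<close>.\<close>

definition u_threshold :: real where
  "u_threshold = - (100 * (\<bar>v 0 far_radius\<bar> + 2 * far_radius) + 1)"

lemma Hs_memD:
  assumes "0 < s" and "(u, R) \<in> Hs m v u0 s"
  shows "R > 0" "1 / R > 2 * m u" "u < u0" "v u (1 / R) - u = - 2 * u / s"
  using assms by (auto simp: Hs_def field_simps)

lemma Hs_far:
  assumes s: "0 < s" "s \<le> 1" and u0: "u0 \<le> u_threshold" and h: "(u, R) \<in> Hs m v u0 s"
  shows "far_radius \<le> 1 / R" "99/100 \<le> - u * R / s" "- u * R / s \<le> 101/100"
proof -
  define r L V0 where "r = 1 / R" and "L = - u / s" and "V0 = v 0 far_radius"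
  note H = Hs_memD[OF s(1) h]
  have rp: "r > 0" using H by (simp add: r_def)
  have u_large: "- u > 100 * \<bar>V0\<bar> + 200 * far_radius + 1"
    using H u0 by (simp add: u_threshold_def V0_def)
  have far_pos: "far_radius > 0" using far_radius_ge by simp
  have u_neg: "u < 0" using u_large far_pos abs_ge_zero[of V0] by linarith
  have Lu: "L \<ge> - u"
    using s u_neg divide_left_mono[of s 1 "- u"] by (simp add: L_def)
  have eq: "v u r - u = 2 * L" using H(4) by (simp add: r_def L_def)
  have v_far: "v u far_radius \<le> V0 + u"
    using v_increment_u_far[of far_radius u 0] u_neg by (simp add: V0_def)
  show r_far: "far_radius \<le> 1 / R"
  proof (rule ccontr)
    assume "\<not> far_radius \<le> 1 / R"
    then have "v u r < v u far_radius" using v_strict_mono_r H(2) by (simp add: r_def)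
    then show False
      using eq v_far Lu u_large far_pos abs_ge_self[of V0] abs_ge_zero[of V0] by linarith
  qed
  then have r_far': "far_radius \<le> r" by (simp add: r_def)
  have b: "2 * L \<le> V0 + 2003/1000 * r"
    using v_increment_r_far[OF order_refl r_far', of u] eq v_far far_pos
    by (unfold ring_distribs, linarith)
  have "v 0 r - v u r \<le> 1001/1000 * (0 - u)"
    using v_increment_u_far[OF r_far', of u 0] u_neg by simp
  moreover have "2 * (r - far_radius) \<le> v 0 r - V0"
    using v_increment_r_far[OF order_refl r_far', of 0] by (simp add: V0_def)
  ultimately have c: "2 * L \<ge> V0 + 2 * r - 2 * far_radius - 1/1000 * L"
    using eq Lu by (unfold ring_distribs, linarith)
  have small: "\<bar>V0\<bar> + 2 * far_radius \<le> L / 100" using u_large Lu by linarith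
  have y: "- u * R / s = L / r" by (simp add: L_def r_def)
  have "99/100 * r \<le> L" "L \<le> 101/100 * r"
    using b c small far_pos abs_ge_self[of V0] abs_ge_minus_self[of V0] by linarith+
  then show "99/100 \<le> - u * R / s" "- u * R / s \<le> 101/100"
    unfolding y using rp by (simp_all add: le_divide_eq divide_le_eq)
qed

lemma Hs_exists:
  assumes s: "0 < s" "s \<le> 1" and u0: "u0 \<le> u_threshold" and u: "u < u0"
  shows "\<exists>R. (u, R) \<in> Hs m v u0 s"
proof -
  define L V0 where "L = - u / s" and "V0 = v 0 far_radius"
  define rb where "rb = far_radius + 2 * L"
  have far_pos: "far_radius > 0" using far_radius_ge by simp
  have u_large: "- u > 100 * \<bar>V0\<bar> + 200 * far_radius + 1"
    using u u0 by (simp add: u_threshold_def V0_def)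
  have u_neg: "u < 0" using u_large far_pos abs_ge_zero[of V0] by linarith
  have Lu: "L \<ge> - u"
    using s u_neg divide_left_mono[of s 1 "- u"] by (simp add: L_def)
  have rb: "far_radius \<le> rb" using Lu u_neg by (simp add: rb_def)
  have "v u far_radius \<le> u + 2 * L"
    using v_increment_u_far[of far_radius u 0] u_neg Lu u_large far_pos
      abs_ge_self[of V0] abs_ge_zero[of V0]
    by (simp add: V0_def)
  moreover have "u + 2 * L \<le> v u rb"
  proof -
    have "v 0 rb - v u rb \<le> 1001/1000 * (0 - u)"
      using v_increment_u_far[OF rb, of u 0] u_neg by simp
    moreover have "2 * (rb - far_radius) \<le> v 0 rb - V0"
      using v_increment_r_far[OF order_refl rb, of 0] by (simp add: V0_def)
    ultimately show ?thesis
      using Lu u_large u_neg far_pos abs_ge_minus_self[of V0] abs_ge_zero[of V0]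
      unfolding rb_def by (unfold ring_distribs, linarith)
  qed
  moreover have m_far: "2 * m u < far_radius" using m_le_mass_bound[of u] far_radius_ge by linarith
  ultimately obtain r where r: "far_radius \<le> r" "v u r = u + 2 * L"
    using IVT'[of "v u" far_radius "u + 2 * L" rb] rb continuous_on_v_r[of u far_radius rb] by auto
  then have "(u, 1 / r) \<in> Hs m v u0 s"
    unfolding Hs_def using far_pos m_far u s by (auto simp: L_def field_simps)
  then show ?thesis by blast
qed

lemma Hs_R_eq:
  assumes s: "0 < s" and h: "(u, R) \<in> Hs m v u0 s"
  shows "Hs_R m v u0 s u = R"
  unfolding Hs_R_def
proof (rule the_equality)
  fix R' assume h': "(u, R') \<in> Hs m v u0 s"
  then have "1 / R' = 1 / R"
    using v_inj_r[of u "1 / R'" "1 / R"] Hs_memD[OF s h] Hs_memD[OF s h'] by simp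
  then show "R' = R" by simp
qed (rule h)

lemma Hs_R_mem:
  assumes s: "0 < s" "s \<le> 1" and u0: "u0 \<le> u_threshold" and u: "u < u0"
  shows "(u, Hs_R m v u0 s u) \<in> Hs m v u0 s"
  using Hs_exists[OF assms] Hs_R_eq[OF s(1)] by force

lemma Hs_radius_lipschitz:
  assumes s: "0 < s" "s \<le> 1" and u0: "u0 \<le> u_threshold" and ab: "a < b" "b < u0"
  shows "\<bar>1 / Hs_R m v u0 s a - 1 / Hs_R m v u0 s b\<bar> \<le> (1 / s + 1) * \<bar>a - b\<bar>"
proof -
  define ra rb where "ra = 1 / Hs_R m v u0 s a" and "rb = 1 / Hs_R m v u0 s b"
  have ha: "(a, Hs_R m v u0 s a) \<in> Hs m v u0 s" and hb: "(b, Hs_R m v u0 s b) \<in> Hs m v u0 s"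
    using Hs_R_mem[OF s u0] ab by auto
  have ra0: "far_radius \<le> ra" and rb0: "far_radius \<le> rb"
    using Hs_far(1)[OF s u0 ha] Hs_far(1)[OF s u0 hb] by (simp_all add: ra_def rb_def)
  define d where "d = b - a"
  have d0: "d > 0" using ab by (simp add: d_def)
  have D: "v a ra - v b rb = 2 * (d / s) - d"
    using Hs_memD(4)[OF s(1) ha] Hs_memD(4)[OF s(1) hb] s
    by (simp add: ra_def rb_def d_def field_simps)
  have ds: "d / s \<ge> d" using d0 s by (simp add: le_divide_eq)
  have vb: "d \<le> v b rb - v a rb \<and> v b rb - v a rb \<le> 1001/1000 * d"
    using v_increment_u_far[OF rb0, of a b] ab by (simp add: d_def)
  have le: "rb \<le> ra"
  proof (rule ccontr)
    assume "\<not> rb \<le> ra"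
    then have "v a ra < v a rb"
      using v_strict_mono_r[of a ra rb] ra0 far_radius_ge m_le_mass_bound[of a] by simp
    then show False using D vb ds d0 by linarith
  qed
  have "2 * (ra - rb) \<le> v a ra - v a rb" using v_increment_r_far[OF rb0 le, of a] by simp
  then have "ra - rb \<le> d / s + d" using D vb d0 by (unfold ring_distribs, linarith)
  moreover have "(1 / s + 1) * \<bar>a - b\<bar> = d / s + d" using d0 by (simp add: d_def field_simps)
  ultimately show ?thesis using le by (simp add: ra_def rb_def)
qed

lemma continuous_on_Hs_R:
  assumes s: "0 < s" "s \<le> 1" and u0: "u0 \<le> u_threshold"
  shows "continuous_on {..<u0} (Hs_R m v u0 s)"
proof -
  have "(1 / s + 1)-lipschitz_on {..<u0} (\<lambda>u. 1 / Hs_R m v u0 s u)"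
  proof (rule lipschitz_onI)
    fix x y assume "x \<in> {..<u0}" "y \<in> {..<u0}"
    then show "dist (1 / Hs_R m v u0 s x) (1 / Hs_R m v u0 s y) \<le> (1 / s + 1) * dist x y"
      using Hs_radius_lipschitz[OF s u0, of x y] Hs_radius_lipschitz[OF s u0, of y x]
      by (cases x y rule: linorder_cases) (auto simp: dist_real_def abs_minus_commute)
  qed (use s in simp)
  then have "continuous_on {..<u0} (\<lambda>u. 1 / (1 / Hs_R m v u0 s u))"
    using Hs_memD(1)[OF s(1) Hs_R_mem[OF s u0]]
    by (intro continuous_on_divide[OF continuous_on_const lipschitz_on_continuous_on]) force+
  then show ?thesis by simp
qed

lemma Hs_param_eq:
  assumes s: "0 < s" "s \<le> 1" and u0: "u0 \<le> u_threshold"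
  shows "Hs_param m v u0 s = {..<u0} \<times> {0<..<pi} \<times> {0<..<2 * pi}"
  using Hs_memD(3)[OF s(1)] Hs_exists[OF s u0] by (auto simp: Hs_param_def)

lemma Hs_subset_Omega:
  assumes s: "0 < s" "s \<le> 1" and u0: "u0 < 0" and h: "(u, R) \<in> Hs m v u0 s"
  shows "(u, R) \<in> Omega m v u0"
proof -
  note H = Hs_memD[OF s(1) h]
  have "- 2 * u / 1 \<le> - 2 * u / s"
    using s H(3) u0 by (intro divide_left_mono) auto
  then show ?thesis using H by (simp add: Omega_def)
qed

lemma on_Hs_eq:
  "on_Hs m v u0 s f q =
    f (fst q) (Hs_R m v u0 s (fst q)) (sph (fst (snd q)) (snd (snd q))) * sin (fst (snd q))"
  by (simp add: on_Hs_def split_beta)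

lemma energy_density_comparable_on_Hs:
  assumes s: "0 < s" "s \<le> 1" and u0: "u0 \<le> u_threshold" and q: "q \<in> Hs_param m v u0 s"
  shows "1/100 * on_Hs m v u0 s (I_density \<phi>) q \<le> on_Hs m v u0 s (energy_density m \<psi> s \<phi>) q
    \<and> on_Hs m v u0 s (energy_density m \<psi> s \<phi>) q \<le> 5 * on_Hs m v u0 s (I_density \<phi>) q"
proof -
  obtain u th vp where q_eq: "q = (u, th, vp)" by (cases q)
  define R x where "R = Hs_R m v u0 s u" and "x = sph th vp"
  have u: "u < u0" and th: "0 < th" "th < pi"
    using q Hs_param_eq[OF s u0] by (auto simp: q_eq)
  have h: "(u, R) \<in> Hs m v u0 s" using Hs_R_mem[OF s u0 u] by (simp add: R_def)
  have Rp: "R > 0" using Hs_memD(1)[OF s(1) h] .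
  note far = Hs_far[OF s u0 h]
  have "m u * R \<le> mass_bound * (1 / far_radius)"
    using far(1) Rp far_radius_ge m_le_mass_bound[of u] m_pos[of u]
    by (intro mult_mono) (auto simp: le_divide_eq field_simps)
  then have q_small: "2 * m u * R \<le> 2/10000"
    using mass_bound_ge_1 by (simp add: far_radius_def)
  have u_neg: "u < 0" using u u0 far_radius_ge by (simp add: u_threshold_def)
  have G: "sph_grad_sq \<phi> u R x \<ge> 0" by (simp add: sph_grad_sq_def Let_def)
  have p: "1 \<le> \<psi> u (1 / R)" "\<psi> u (1 / R) \<le> 1001/1000" using psi_far[OF far(1)] by auto
  have "1/100 * I_density \<phi> u R x \<le> energy_density m \<psi> s \<phi> u R x \<and>
      energy_density m \<psi> s \<phi> u R x \<le> 5 * I_density \<phi> u R x"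
    using energy_density_comparable[OF s u_neg Rp m_pos G far(2,3) p q_small,
        where pu = "phi_u \<phi> u R x" and pR = "phi_R \<phi> u R x"]
    unfolding energy_density_def I_density_def Let_def by simp
  moreover have "sin th > 0" using th by (rule sin_gt_zero)
  ultimately show ?thesis
    by (simp add: on_Hs_def q_eq R_def x_def mult_right_mono mult.assoc[symmetric])
qed

lemma continuous_on_Hs_R_param:
  assumes s: "0 < s" "s \<le> 1" and u0: "u0 \<le> u_threshold"
  shows "continuous_on (Hs_param m v u0 s) (\<lambda>q. Hs_R m v u0 s (fst q))"
  using Hs_param_eq[OF s u0]
  by (intro continuous_on_compose2[OF continuous_on_Hs_R[OF s u0]] continuous_intros) auto

lemma continuous_on_frechet_derivative_on_Hs:
  assumes s: "0 < s" "s \<le> 1" and u0: "u0 \<le> u_threshold"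
    and cover: "\<forall>u R x. (u, R) \<in> Omega m v u0 \<longrightarrow> x \<in> sphere 0 1 \<longrightarrow> (u, R, x) \<in> S"
    and \<phi>: "smooth_on S \<phi>" and e: "e \<in> Basis"
  shows "continuous_on (Hs_param m v u0 s) (\<lambda>q. frechet_derivative \<phi>
    (at (fst q, Hs_R m v u0 s (fst q), sph (fst (snd q)) (snd (snd q)))) e)"
proof (rule continuous_on_compose2[OF smooth_on_continuous_on_frechet_derivative[OF \<phi> e]])
  show "continuous_on (Hs_param m v u0 s)
      (\<lambda>q. (fst q, Hs_R m v u0 s (fst q), sph (fst (snd q)) (snd (snd q))))"
    by (intro continuous_intros continuous_on_sph continuous_on_Hs_R_param[OF s u0])
  have u0_neg: "u0 < 0" using u0 far_radius_ge by (simp add: u_threshold_def)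
  show "(\<lambda>q. (fst q, Hs_R m v u0 s (fst q), sph (fst (snd q)) (snd (snd q)))) ` Hs_param m v u0 s
      \<subseteq> S"
    using Hs_subset_Omega[OF s u0_neg Hs_R_mem[OF s u0]] cover norm_sph Hs_param_eq[OF s u0]
    by auto
qed

lemma continuous_on_energy_density_on_Hs:
  assumes s: "0 < s" "s \<le> 1" and u0: "u0 \<le> u_threshold"
    and cover: "\<forall>u R x. (u, R) \<in> Omega m v u0 \<longrightarrow> x \<in> sphere 0 1 \<longrightarrow> (u, R, x) \<in> S"
    and \<phi>: "smooth_on S \<phi>"
  shows "continuous_on (Hs_param m v u0 s) (on_Hs m v u0 s (energy_density m \<psi> s \<phi>))"
proof -
  define P where "P = Hs_param m v u0 s"
  define u R X where "u q = fst q" and "R q = Hs_R m v u0 s (fst q)"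
    and "X q = sph (fst (snd q)) (snd (snd q))" for q :: "real \<times> real \<times> real"
  have on_Hs: "(u q, R q) \<in> Hs m v u0 s" if "q \<in> P" for q
    using Hs_R_mem[OF s u0] that Hs_param_eq[OF s u0] by (auto simp: P_def u_def R_def)
  have cu: "continuous_on P u" unfolding u_def by (intro continuous_intros)
  have cR: "continuous_on P R"
    using continuous_on_Hs_R_param[OF s u0] by (simp add: P_def R_def[abs_def])
  have cX: "continuous_on P X" unfolding X_def by (intro continuous_on_sph continuous_intros)
  note cD = continuous_on_frechet_derivative_on_Hs[OF s u0 cover \<phi>, folded P_def u_def R_def X_def]
  have basis: "(1, 0, 0) \<in> (Basis :: (real \<times> real \<times> (real^3)) set)"
    "(0, 1, 0) \<in> (Basis :: (real \<times> real \<times> (real^3)) set)"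
    "(0, 0, axis i 1) \<in> (Basis :: (real \<times> real \<times> (real^3)) set)" for i
    by (auto simp: Basis_prod_def zero_prod_def)
  have c_phi_u: "continuous_on P (\<lambda>q. phi_u \<phi> (u q) (R q) (X q))"
    using cD[OF basis(1)] by (simp add: phi_u_def)
  have c_phi_R: "continuous_on P (\<lambda>q. phi_R \<phi> (u q) (R q) (X q))"
    using cD[OF basis(2)] by (simp add: phi_R_def)
  have c_grad: "continuous_on P (\<lambda>q. sph_grad_sq \<phi> (u q) (R q) (X q))"
    unfolding sph_grad_sq_def grad_x_def Let_def
    by (intro continuous_intros continuous_on_vec_lambda cX cD[OF basis(3)])
  have c_pair: "continuous_on P (\<lambda>q. (u q, 1 / R q))"
    using Hs_memD(1)[OF s(1) on_Hs] by (intro continuous_intros cu cR) force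
  have "(\<lambda>q. (u q, 1 / R q)) ` P \<subseteq> exterior m"
    using Hs_memD(2)[OF s(1) on_Hs] by (auto simp: exterior_iff)
  from continuous_on_compose2[OF continuous_on_psi c_pair this]
  have c_psi: "continuous_on P (\<lambda>q. \<psi> (u q) (1 / R q))" by simp
  have c_m: "continuous_on P (\<lambda>q. m (u q))"
    by (rule continuous_on_compose2[OF continuous_on_m[of UNIV] cu]) simp
  have psi_pos': "\<psi> (u q) (1 / R q) > 0" if "q \<in> P" for q
    using psi_pos Hs_memD(2)[OF s(1) on_Hs[OF that]] by (simp add: exterior_iff)
  have "continuous_on P (\<lambda>q. energy_density m \<psi> s \<phi> (u q) (R q) (X q) * sin (fst (snd q)))"
    unfolding energy_density_def Let_def
    by (intro continuous_intros c_phi_u c_phi_R c_grad c_psi c_m cu cR)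
      (use psi_pos' s in force)+
  then show ?thesis
    by (simp add: P_def on_Hs_eq[abs_def] u_def R_def X_def)
qed

lemma energy_comparable_on_Hs:
  assumes u0: "u0 \<le> u_threshold"
  shows "\<forall>s \<in> {0<..1}. \<forall>\<phi> :: real \<times> real \<times> (real^3) \<Rightarrow> real. \<forall>S.
    (\<forall>u R x. (u, R) \<in> Omega m v u0 \<longrightarrow> x \<in> sphere 0 1 \<longrightarrow> (u, R, x) \<in> S)
    \<longrightarrow> smooth_on S \<phi>
    \<longrightarrow> set_integrable lborel (Hs_param m v u0 s) (on_Hs m v u0 s (I_density \<phi>))
    \<longrightarrow> set_integrable lborel (Hs_param m v u0 s) (on_Hs m v u0 s (energy_density m \<psi> s \<phi>))
        \<and> 1/100 * I_Hs m v u0 s \<phi> \<le> energy_Hs m \<psi> v u0 s \<phi>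
        \<and> energy_Hs m \<psi> v u0 s \<phi> \<le> 5 * I_Hs m v u0 s \<phi>"
proof (intro ballI allI impI)
  fix s :: real and \<phi> :: "real \<times> real \<times> (real^3) \<Rightarrow> real" and S
  assume "s \<in> {0<..1}"
  then have s: "0 < s" "s \<le> 1" by auto
  assume "\<forall>u R x. (u, R) \<in> Omega m v u0 \<longrightarrow> x \<in> sphere 0 1 \<longrightarrow> (u, R, x) \<in> S"
    and "smooth_on S \<phi>"
  note density_continuous = continuous_on_energy_density_on_Hs[OF s u0 this]
  assume I_integrable: "set_integrable lborel (Hs_param m v u0 s) (on_Hs m v u0 s (I_density \<phi>))"
  have "Hs_param m v u0 s \<in> sets borel"
    unfolding Hs_param_eq[OF s u0] by (intro borel_open open_Times) auto
  from set_integral_comparable[OF this density_continuous I_integrable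
      energy_density_comparable_on_Hs[OF s u0]]
  show "set_integrable lborel (Hs_param m v u0 s) (on_Hs m v u0 s (energy_density m \<psi> s \<phi>))
      \<and> 1/100 * I_Hs m v u0 s \<phi> \<le> energy_Hs m \<psi> v u0 s \<phi>
      \<and> energy_Hs m \<psi> v u0 s \<phi> \<le> 5 * I_Hs m v u0 s \<phi>"
    unfolding energy_Hs_def I_Hs_def .
qed

end

theorem proposition3p2:
  fixes m :: "real \<Rightarrow> real" and \<psi> v :: "real \<Rightarrow> real \<Rightarrow> real"
  assumes m_smooth: "smooth_on UNIV m"
    and m_nonincr: "\<And>a b. a \<le> b \<Longrightarrow> m b \<le> m a"
    and m_pos: "\<And>u. m u > 0"
    and m_bdd: "bounded (range m)"
    and psi_pos: "\<And>u r. (u, r) \<in> exterior m \<Longrightarrow> \<psi> u r > 0"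
    and psi_eq: "\<And>u r. (u, r) \<in> exterior m \<Longrightarrow>
        \<exists>D. ((\<lambda>(a, b). \<psi> a b) has_derivative D) (at (u, r)) \<and>
            D (1, - Fr m u r / 2) + 2 * deriv m u / (Fr m u r * r) * \<psi> u r = 0"
    and psi_scri: "\<And>\<rho> \<tau>0. (\<forall>\<tau>\<le>\<tau>0. (\<tau>, \<rho> \<tau>) \<in> exterior m \<and>
                     (\<rho> has_real_derivative (- Fr m \<tau> (\<rho> \<tau>) / 2)) (at \<tau>))
        \<Longrightarrow> ((\<lambda>\<tau>. \<psi> \<tau> (\<rho> \<tau>)) \<longlongrightarrow> 1) at_bot"
    and v_diff: "\<And>u r. (u, r) \<in> exterior m \<Longrightarrow>
        ((\<lambda>(a, b). v a b) has_derivative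
           (\<lambda>(du, dr). \<psi> u r * du + 2 * \<psi> u r / Fr m u r * dr)) (at (u, r))"
  shows "\<exists>U. \<forall>u0. u0 < U \<longrightarrow> u0 < 0 \<longrightarrow>
          (\<exists>c C. 0 < c \<and> c \<le> C \<and>
            (\<forall>s \<in> {0<..1}. \<forall>\<phi> :: real \<times> real \<times> (real^3) \<Rightarrow> real. \<forall>S.
               (\<forall>u R x. (u, R) \<in> Omega m v u0 \<longrightarrow> x \<in> sphere 0 1 \<longrightarrow> (u, R, x) \<in> S)
               \<longrightarrow> smooth_on S \<phi>
               \<longrightarrow> set_integrable lborel (Hs_param m v u0 s) (on_Hs m v u0 s (I_density \<phi>))
               \<longrightarrow> set_integrable lborel (Hs_param m v u0 s) (on_Hs m v u0 s (energy_density m \<psi> s \<phi>))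
                   \<and> c * I_Hs m v u0 s \<phi> \<le> energy_Hs m \<psi> v u0 s \<phi>
                   \<and> energy_Hs m \<psi> v u0 s \<phi> \<le> C * I_Hs m v u0 s \<phi>))"
proof -
  interpret vaidya m \<psi> v
    using m_smooth m_nonincr m_pos m_bdd psi_pos psi_eq psi_scri v_diff by unfold_locales
  show ?thesis
    by (intro exI[of _ u_threshold] allI impI exI[of _ "1/100"] exI[of _ 5] conjI[OF _ conjI])
      (simp, simp, rule energy_comparable_on_Hs, simp)
qed

end
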